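(* Let $P\ll Q$ be probability measures, let $\gamma>1$, and let $f:(0,\infty)\to\mathbb R$ be convex with $f(1)=0$, differentiable at $1$ and at $\gamma$, with $f'(\gamma)>f'(1)$. Then $$E_\gamma(P\Vert Q)\le \frac{D_f(P\Vert Q)}{f'(\gamma)-f'(1)}.$$ If in addition $f$ is differentiable on $[\gamma,\infty)$ with $f'$ being $L$-Lipschitz on $[\gamma,\infty)$ for some $L>0$, and $\gamma_0:=\gamma+\sqrt{2\big(f(\gamma)-f'(1)(\gamma-1)\big)/L}$, then $$E_\gamma(P\Vert Q)\le \frac{D_f(P\Vert Q)}{f'(\gamma_0)-f'(1)}.$$
   Context: For convex $f$ on $(0,\infty)$ extended by $f(0):=\lim_{t\downarrow0}f(t)$ and $P\ll Q$, $D_f(P\Vert Q):=\int f(\mathrm dP/\mathrm dQ)\,\mathrm dQ$. The $E_\gamma$-divergence is $E_\gamma(P\Vert Q):=\int[\mathrm dP/\mathrm dQ-\gamma]_+\,\mathrm dQ$ with $[x]_+=\max\{x,0\}$. *)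

theory Defs
  imports "HOL-Probability.Probability"
begin

definition dens :: "'a measure \<Rightarrow> 'a measure \<Rightarrow> 'a \<Rightarrow> real" where
  "dens P Q x = enn2real (RN_deriv Q P x)"

text \<open>Extension of f from (0,inf) to [0,inf): f(0) := lim_{t -> 0+} f t, possibly +inf.\<close>
definition fext :: "(real \<Rightarrow> real) \<Rightarrow> real \<Rightarrow> ereal" where
  "fext f t = (if t = 0 then Lim (at_right 0) (\<lambda>s. ereal (f s)) else ereal (f t))"

definition f_div :: "(real \<Rightarrow> real) \<Rightarrow> 'a measure \<Rightarrow> 'a measure \<Rightarrow> ereal" where
  "f_div f P Q =
     enn2ereal (\<integral>\<^sup>+ x. e2ennreal (fext f (dens P Q x)) \<partial>Q)
   - enn2ereal (\<integral>\<^sup>+ x. e2ennreal (- fext f (dens P Q x)) \<partial>Q)"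

definition E_div :: "real \<Rightarrow> 'a measure \<Rightarrow> 'a measure \<Rightarrow> real" where
  "E_div \<gamma> P Q = (\<integral>x. max (dens P Q x - \<gamma>) 0 \<partial>Q)"

end

theory Submission
  imports Defs
begin

(* For b \<ge> \<gamma> consider the hinge phi(t) = f'(1) (t - 1) + (f'(b) - f'(1)) [t - \<gamma>]_+.
   Left of \<gamma> it is the tangent of f at 1; right of \<gamma> it has slope f'(b), so it stays below
   the tangent at b as soon as phi(b) \<le> f(b).  Then f \<ge> phi on [0, \<infinity>), and integrating
   phi(dP/dQ) against Q gives (f'(b) - f'(1)) E_\<gamma>(P||Q), the linear part integrating to 0.
   The choice b = \<gamma> works because f lies above its tangent at 1.  If f' is L-Lipschitz on
   [\<gamma>, \<infinity>), then f(b) \<ge> f(\<gamma>) + f'(b) (b - \<gamma>) - L (b - \<gamma>)^2 / 2, and b = \<gamma>_0 is exactly the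
   point where the quadratic term uses up the tangent gap f(\<gamma>) - f'(1) (\<gamma> - 1). *)

lemma convex_on_ge_tangent:
  fixes f :: "real \<Rightarrow> real"
  assumes cv: "convex_on S f" and "open S" and "a \<in> S" and "x \<in> S"
    and "f differentiable (at a)"
  shows "f a + deriv f a * (x - a) \<le> f x"
proof -
  have "(f has_field_derivative deriv f a) (at a within S)"
    using assms(5) DERIV_deriv_iff_real_differentiable has_field_derivative_at_within by blast
  then have "deriv f a * (x - a) \<le> f x - f a"
    using assms convex_connected[OF convex_on_imp_convex[OF cv]]
    by (intro convex_on_imp_above_tangent[OF cv]) (auto simp: interior_open)
  then show ?thesis by simp
qed

lemma convex_on_deriv_mono:
  fixes f :: "real \<Rightarrow> real"
  assumes cv: "convex_on S f" and S: "open S" and "x \<in> S" "y \<in> S" "x \<le> y"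
    and "f differentiable (at x)" and "f differentiable (at y)"
  shows "deriv f x \<le> deriv f y"
proof (cases "x = y")
  case False
  have "f x + deriv f x * (y - x) \<le> f y" "f y + deriv f y * (x - y) \<le> f x"
    using convex_on_ge_tangent[OF cv S] assms by auto
  then have "0 \<le> (deriv f y - deriv f x) * (y - x)" by (simp add: algebra_simps)
  then show ?thesis using False \<open>x \<le> y\<close> by (simp add: zero_le_mult_iff)
qed simp

lemma antimono_on_tendsto_at_right_SUP:
  fixes g :: "real \<Rightarrow> 'b::{complete_linorder, linorder_topology}"
  assumes g: "antimono_on {a<..<b} g" and "a < b"
  shows "(g \<longlongrightarrow> (SUP s\<in>{a<..<b}. g s)) (at_right a)"
proof (rule increasing_tendsto)
  show "\<forall>\<^sub>F s in at_right a. g s \<le> (SUP s\<in>{a<..<b}. g s)"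
    using eventually_at_right_real[OF \<open>a < b\<close>] by eventually_elim (rule SUP_upper)
next
  fix y assume "y < (SUP s\<in>{a<..<b}. g s)"
  then obtain s0 where s0: "s0 \<in> {a<..<b}" "y < g s0" by (auto simp: less_SUP_iff)
  have "\<forall>\<^sub>F s in at_right a. s \<in> {a<..<s0}"
    using s0 by (intro eventually_at_right_real) auto
  then show "\<forall>\<^sub>F s in at_right a. y < g s"
  proof eventually_elim
    case (elim s)
    then have "g s0 \<le> g s" using s0 by (intro monotone_onD[OF g]) auto
    then show ?case using s0 by order
  qed
qed

lemma convex_on_tangent_gap_antimono:
  fixes f :: "real \<Rightarrow> real"
  assumes cv: "convex_on {0<..} f" and a: "0 < a" and df: "f differentiable (at a)"
  shows "antimono_on {0<..<a} (\<lambda>s. f s - f a - deriv f a * (s - a))"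
    (is "antimono_on _ ?g")
proof (rule monotone_onI)
  fix s t assume st: "s \<in> {0<..<a}" "t \<in> {0<..<a}" "s \<le> t"
  define l where "l = (a - t) / (a - s)"
  have l01: "0 \<le> l" "l \<le> 1"
    using st by (auto simp: l_def field_simps)
  have "l * (a - s) = a - t"
    using st by (simp add: l_def)
  then have lt: "t = l * s + (1 - l) * a"
    by (simp add: algebra_simps)
  have "f t \<le> l * f s + (1 - l) * f a"
    using convex_onD[OF cv, of "1 - l" s a] st a l01 lt by simp
  moreover have "t - a = l * (s - a)"
    using lt by (simp add: algebra_simps)
  ultimately have "?g t \<le> l * f s + (1 - l) * f a - f a - deriv f a * (l * (s - a))"
    by simp
  also have "\<dots> = l * ?g s"
    by (simp add: algebra_simps)
  also have "\<dots> \<le> ?g s"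
    using convex_on_ge_tangent[OF cv _ _ _ df, of s] st a l01
    by (intro mult_left_le_one_le) auto
  finally show "?g t \<le> ?g s" .
qed

lemma fext_zero_ge_tangent:
  fixes f :: "real \<Rightarrow> real"
  assumes cv: "convex_on {0<..} f" and a: "0 < a" and df: "f differentiable (at a)"
  shows "ereal (f a - deriv f a * a) \<le> fext f 0"
proof -
  define g where "g s = f s - f a - deriv f a * (s - a)" for s
  define T where "T s = f a + deriv f a * (s - a)" for s
  \<comment> \<open>\<open>fext f 0\<close> is a \<open>Lim\<close>, so the limit must first be shown to exist: \<open>g\<close> is monotone.\<close>
  have lim_g: "((\<lambda>s. ereal (g s)) \<longlongrightarrow> (SUP s\<in>{0<..<a}. ereal (g s))) (at_right 0)"
    using convex_on_tangent_gap_antimono[OF cv a df] a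
    by (intro antimono_on_tendsto_at_right_SUP) (auto simp: g_def monotone_on_def)
  have lim_T: "((\<lambda>s. ereal (T s)) \<longlongrightarrow> ereal (f a - deriv f a * a)) (at_right 0)"
    unfolding T_def by (rule tendsto_eq_intros refl | simp)+
  have "((\<lambda>s. ereal (g s) + ereal (T s)) \<longlongrightarrow>
          (SUP s\<in>{0<..<a}. ereal (g s)) + ereal (f a - deriv f a * a)) (at_right 0)"
    by (rule tendsto_add_ereal_general1[OF _ lim_g lim_T]) simp
  then have "((\<lambda>s. ereal (f s)) \<longlongrightarrow> fext f 0) (at_right 0)"
    by (simp add: g_def T_def fext_def tendsto_Lim)
  moreover have "\<forall>\<^sub>F s in at_right 0. ereal (T s) \<le> ereal (f s)"
    using eventually_at_right_less[of "0::real"]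
    by eventually_elim (use convex_on_ge_tangent[OF cv _ _ _ df] a in \<open>simp add: T_def\<close>)
  ultimately show ?thesis
    using lim_T by (intro tendsto_le[OF trivial_limit_at_right_real])
qed

lemma fext_ge_hinge:
  fixes f :: "real \<Rightarrow> real"
  assumes cv: "convex_on {0<..} f" and d1: "f differentiable (at 1)"
    and "0 < \<gamma>" and "\<gamma> \<le> b" and db: "f differentiable (at b)"
    and below_b: "f 1 + deriv f 1 * (b - 1) + (deriv f b - deriv f 1) * (b - \<gamma>) \<le> f b"
    and "0 \<le> t"
  shows "ereal (f 1 + deriv f 1 * (t - 1) + (deriv f b - deriv f 1) * max (t - \<gamma>) 0) \<le> fext f t"
proof (cases "t = 0")
  case True
  then show ?thesis
    using fext_zero_ge_tangent[OF cv _ d1] \<open>0 < \<gamma>\<close> by simp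
next
  case False
  then have t: "0 < t" "fext f t = ereal (f t)"
    using \<open>0 \<le> t\<close> by (auto simp: fext_def)
  have "f 1 + deriv f 1 * (t - 1) \<le> f t"
    using convex_on_ge_tangent[OF cv _ _ _ d1] t by simp
  moreover have "f b + deriv f b * (t - b) \<le> f t"
    using convex_on_ge_tangent[OF cv _ _ _ db] t assms by simp
  ultimately show ?thesis
    using t below_b by (simp add: max_def algebra_simps)
qed

lemma
  fixes P Q :: "'a measure"
  assumes "sigma_finite_measure Q" and "prob_space P" and "sets P = sets Q"
    and "absolutely_continuous Q P"
  shows integrable_dens: "integrable Q (dens P Q)"
    and integral_dens: "integral\<^sup>L Q (dens P Q) = 1"
proof -
  interpret Q: sigma_finite_measure Q by fact
  have [measurable]: "dens P Q \<in> borel_measurable Q"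
    unfolding dens_def[abs_def] by measurable
  have "(\<integral>\<^sup>+ x. RN_deriv Q P x \<partial>Q) = emeasure (density Q (RN_deriv Q P)) (space Q)"
    by (subst emeasure_density) (auto intro!: nn_integral_cong)
  also have "\<dots> = 1"
    using assms Q.density_RN_deriv prob_space.emeasure_space_1 sets_eq_imp_space_eq by metis
  finally have RN1: "(\<integral>\<^sup>+ x. RN_deriv Q P x \<partial>Q) = 1" .
  then have "AE x in Q. RN_deriv Q P x \<noteq> \<infinity>"
    by (intro nn_integral_PInf_AE) auto
  then have "(\<integral>\<^sup>+ x. ennreal (dens P Q x) \<partial>Q) = ennreal 1"
    using RN1 by (subst nn_integral_cong_AE) (auto simp: dens_def less_top)
  then have "integrable Q (dens P Q) \<and> integral\<^sup>L Q (dens P Q) = 1"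
    by (subst (asm) nn_integral_eq_integrable) (auto simp: dens_def)
  then show "integrable Q (dens P Q)" "integral\<^sup>L Q (dens P Q) = 1" by auto
qed

lemma integral_le_nn_integral_pos_neg:
  fixes h :: "'a \<Rightarrow> real" and F :: "'a \<Rightarrow> ereal"
  assumes h: "integrable M h" and le: "\<And>x. x \<in> space M \<Longrightarrow> ereal (h x) \<le> F x"
  shows "ereal (integral\<^sup>L M h)
    \<le> enn2ereal (\<integral>\<^sup>+ x. e2ennreal (F x) \<partial>M) - enn2ereal (\<integral>\<^sup>+ x. e2ennreal (- F x) \<partial>M)"
proof -
  have pos: "(\<integral>\<^sup>+ x. ennreal (h x) \<partial>M) \<le> (\<integral>\<^sup>+ x. e2ennreal (F x) \<partial>M)"
    using le by (intro nn_integral_mono) (metis e2ennreal_ereal e2ennreal_mono)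
  have neg: "(\<integral>\<^sup>+ x. e2ennreal (- F x) \<partial>M) \<le> (\<integral>\<^sup>+ x. ennreal (- h x) \<partial>M)"
    using le by (intro nn_integral_mono) (metis e2ennreal_ereal e2ennreal_mono ereal_minus_le_minus uminus_ereal.simps(1))
  have "ereal (integral\<^sup>L M h) = ereal (enn2real (\<integral>\<^sup>+ x. ennreal (h x) \<partial>M))
      - ereal (enn2real (\<integral>\<^sup>+ x. ennreal (- h x) \<partial>M))"
    using real_lebesgue_integral_def[OF h] by simp
  also have "\<dots>
      = enn2ereal (\<integral>\<^sup>+ x. ennreal (h x) \<partial>M) - enn2ereal (\<integral>\<^sup>+ x. ennreal (- h x) \<partial>M)"
    using integrableD[OF h]
    by (simp add: enn2ereal_ennreal[symmetric] less_top del: enn2ereal_ennreal)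
  also have "\<dots> \<le> enn2ereal (\<integral>\<^sup>+ x. e2ennreal (F x) \<partial>M) - enn2ereal (\<integral>\<^sup>+ x. e2ennreal (- F x) \<partial>M)"
    using pos neg by (intro ereal_minus_mono) (auto simp: less_eq_ennreal.rep_eq[symmetric])
  finally show ?thesis .
qed

lemma E_div_le_f_div_hinge:
  fixes P Q :: "'a measure" and f :: "real \<Rightarrow> real"
  assumes "prob_space P" and "prob_space Q" and "sets P = sets Q"
    and "absolutely_continuous Q P" and "0 < c"
    and hinge: "\<And>x. x \<in> space Q \<Longrightarrow>
      ereal (d * (dens P Q x - 1) + c * max (dens P Q x - \<gamma>) 0) \<le> fext f (dens P Q x)"
  shows "ereal (E_div \<gamma> P Q) \<le> f_div f P Q / ereal c"
proof -
  interpret Q: prob_space Q by fact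
  have dens: "integrable Q (dens P Q)" "integral\<^sup>L Q (dens P Q) = 1"
    using integrable_dens integral_dens Q.sigma_finite_measure_axioms assms by blast+
  have E: "integrable Q (\<lambda>x. max (dens P Q x - \<gamma>) 0)"
    using dens by (intro integrable_max integrable_diff) auto
  define h where "h x = d * (dens P Q x - 1) + c * max (dens P Q x - \<gamma>) 0" for x
  have "integrable Q h"
    unfolding h_def using dens E by auto
  moreover have "integral\<^sup>L Q h = c * E_div \<gamma> P Q"
    unfolding h_def E_div_def using dens E by (simp add: Q.prob_space)
  ultimately have "ereal c * ereal (E_div \<gamma> P Q) \<le> f_div f P Q"
    using integral_le_nn_integral_pos_neg[of Q h] hinge by (simp add: h_def f_div_def)
  then show ?thesis
    using \<open>0 < c\<close> by (subst ereal_le_divide_pos) auto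
qed

lemma E_div_le_f_div_deriv_gap:
  fixes P Q :: "'a measure" and f :: "real \<Rightarrow> real"
  assumes "prob_space P" and "prob_space Q" and "sets P = sets Q"
    and "absolutely_continuous Q P"
    and cv: "convex_on {0<..} f" and "f 1 = 0" and d1: "f differentiable (at 1)"
    and "0 < \<gamma>" and "\<gamma> \<le> b" and db: "f differentiable (at b)"
    and "deriv f 1 < deriv f b"
    and "deriv f 1 * (b - 1) + (deriv f b - deriv f 1) * (b - \<gamma>) \<le> f b"
  shows "ereal (E_div \<gamma> P Q) \<le> f_div f P Q / ereal (deriv f b - deriv f 1)"
proof (rule E_div_le_f_div_hinge[where d = "deriv f 1"])
  fix x
  show "ereal (deriv f 1 * (dens P Q x - 1) + (deriv f b - deriv f 1) * max (dens P Q x - \<gamma>) 0)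
      \<le> fext f (dens P Q x)"
    using fext_ge_hinge[OF cv d1 _ _ db, of \<gamma> "dens P Q x"] assms by (simp add: dens_def)
qed (use assms in auto)

lemma lipschitz_deriv_quadratic_lower_bound:
  fixes f :: "real \<Rightarrow> real"
  assumes "x \<le> y" and diff: "\<forall>s\<in>{x..y}. f differentiable (at s)"
    and lip: "L-lipschitz_on {x..y} (deriv f)"
  shows "f x + deriv f y * (y - x) - L * (y - x)\<^sup>2 / 2 \<le> f y"
proof -
  define H where "H s = f s - deriv f y * s - L * (y - s)\<^sup>2 / 2" for s
  have "H x \<le> H y"
  proof (rule DERIV_nonneg_imp_nondecreasing[OF \<open>x \<le> y\<close>])
    fix s assume s: "x \<le> s" "s \<le> y"
    have "(f has_real_derivative deriv f s) (at s)"
      using diff s DERIV_deriv_iff_real_differentiable by auto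
    then have "(H has_real_derivative deriv f s - deriv f y + L * (y - s)) (at s)"
      unfolding H_def by (auto intro!: derivative_eq_intros simp: field_simps)
    moreover have "deriv f y - deriv f s \<le> L * (y - s)"
      using lipschitz_onD[OF lip, of y s] s by (simp add: dist_real_def abs_le_iff)
    ultimately show "\<exists>D. (H has_real_derivative D) (at s) \<and> 0 \<le> D"
      by (intro exI conjI) auto
  qed
  then show ?thesis
    by (simp add: H_def algebra_simps)
qed

theorem mainTheorem6:
  fixes P Q :: "'a measure" and f :: "real \<Rightarrow> real" and \<gamma> :: real
  assumes "prob_space P" and "prob_space Q" and "sets P = sets Q"
    and "absolutely_continuous Q P"
    and "\<gamma> > 1"
    and "convex_on {0<..} f" and "f 1 = 0"
    and "f differentiable (at 1)" and "f differentiable (at \<gamma>)"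
    and "deriv f \<gamma> > deriv f 1"
  shows "ereal (E_div \<gamma> P Q) \<le> f_div f P Q / ereal (deriv f \<gamma> - deriv f 1) \<and>
    (\<forall>L>0. (\<forall>x\<in>{\<gamma>..}. f differentiable (at x)) \<longrightarrow>
           L-lipschitz_on {\<gamma>..} (deriv f) \<longrightarrow>
           ereal (E_div \<gamma> P Q) \<le> f_div f P Q /
             ereal (deriv f (\<gamma> + sqrt (2 * (f \<gamma> - deriv f 1 * (\<gamma> - 1)) / L)) - deriv f 1))"
proof -
  note probs = assms(1-4) and cv = assms(6) and f1 = assms(7) and d1 = assms(8)
  have "0 < \<gamma>" using \<open>\<gamma> > 1\<close> by simp
  have gap_nonneg: "0 \<le> f \<gamma> - deriv f 1 * (\<gamma> - 1)"
    using convex_on_ge_tangent[OF cv _ _ _ d1, of \<gamma>] f1 \<open>0 < \<gamma>\<close> by simp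
  show ?thesis
  proof (intro conjI allI impI)
    show "ereal (E_div \<gamma> P Q) \<le> f_div f P Q / ereal (deriv f \<gamma> - deriv f 1)"
      using gap_nonneg assms by (intro E_div_le_f_div_deriv_gap[OF probs cv f1 d1]) auto
  next
    fix L :: real
    assume "0 < L" and diff: "\<forall>x\<in>{\<gamma>..}. f differentiable (at x)"
      and lip: "L-lipschitz_on {\<gamma>..} (deriv f)"
    define \<gamma>\<^sub>0 where "\<gamma>\<^sub>0 = \<gamma> + sqrt (2 * (f \<gamma> - deriv f 1 * (\<gamma> - 1)) / L)"
    have "\<gamma> \<le> \<gamma>\<^sub>0" and sq: "L * (\<gamma>\<^sub>0 - \<gamma>)\<^sup>2 / 2 = f \<gamma> - deriv f 1 * (\<gamma> - 1)"
      using gap_nonneg \<open>0 < L\<close> by (simp_all add: \<gamma>\<^sub>0_def)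
    have "f \<gamma> + deriv f \<gamma>\<^sub>0 * (\<gamma>\<^sub>0 - \<gamma>) - L * (\<gamma>\<^sub>0 - \<gamma>)\<^sup>2 / 2 \<le> f \<gamma>\<^sub>0"
      using diff lipschitz_on_subset[OF lip]
      by (intro lipschitz_deriv_quadratic_lower_bound[OF \<open>\<gamma> \<le> \<gamma>\<^sub>0\<close>]) auto
    then have "deriv f 1 * (\<gamma>\<^sub>0 - 1) + (deriv f \<gamma>\<^sub>0 - deriv f 1) * (\<gamma>\<^sub>0 - \<gamma>) \<le> f \<gamma>\<^sub>0"
      unfolding sq by (simp add: algebra_simps)
    moreover have "deriv f \<gamma> \<le> deriv f \<gamma>\<^sub>0"
      using diff \<open>\<gamma> \<le> \<gamma>\<^sub>0\<close> \<open>0 < \<gamma>\<close> by (intro convex_on_deriv_mono[OF cv]) auto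
    ultimately show "ereal (E_div \<gamma> P Q) \<le> f_div f P Q / ereal (deriv f \<gamma>\<^sub>0 - deriv f 1)"
      using diff \<open>\<gamma> \<le> \<gamma>\<^sub>0\<close> \<open>0 < \<gamma>\<close> assms(10)
      by (intro E_div_le_f_div_deriv_gap[OF probs cv f1 d1]) auto
  qed
qed

end
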